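(* Let $T$ be a conservative ergodic invertible measure-preserving transformation of $(X,\mathcal B,\mu)$. If $T$ is subsequence weakly rationally ergodic and $S$ is an invertible nonsingular transformation with $ST=TS$, then $S$ is measure-preserving. In particular $T$ is not squashable.
   Context: $(X,\mathcal B,\mu)$ is a standard Borel space with nonatomic $\sigma$-finite measure. $S$ is invertible nonsingular if it is invertible, measurable, and $\mu(A)=0\iff\mu(SA)=0$. $T$ is squashable if it commutes with some invertible nonsingular $S$ that is not measure-preserving. For $F$ of positive finite measure, $u_k(F)=\mu(F\cap T^kF)/\mu(F)^2$, $a_n(F)=\sum_{k=0}^{n-1}u_k(F)$. $T$ is subsequence weakly rationally ergodic if there are a sequence $n_i\to\infty$ and a set $F$ of positive finite measure with $\mu(X\setminus\bigcup_{i\ge0}T^iF)=0$ such that for all measurable $A,B\subseteq F$, $\frac{1}{a_{n_i}(F)}\sum_{k=0}^{n_i-1}\mu(A\cap T^kB)\to\mu(A)\mu(B)$. *)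

theory Defs
  imports "HOL-Analysis.Analysis"
begin

definition standard_borel_space :: "('a::polish_space) measure \<Rightarrow> bool" where
  "standard_borel_space M \<longleftrightarrow> space M = UNIV \<and> sets M = sets borel"

definition nonatomic :: "'a measure \<Rightarrow> bool" where
  "nonatomic M \<longleftrightarrow> \<not> (\<exists>A\<in>sets M. emeasure M A > 0 \<and>
      (\<forall>B\<in>sets M. B \<subseteq> A \<longrightarrow> emeasure M B = 0 \<or> emeasure M (A - B) = 0))"

definition invertible_map :: "'a measure \<Rightarrow> ('a \<Rightarrow> 'a) \<Rightarrow> bool" where
  "invertible_map M S \<longleftrightarrow> bij_betw S (space M) (space M) \<and> S \<in> measurable M M
      \<and> the_inv_into (space M) S \<in> measurable M M"

definition nonsingular :: "'a measure \<Rightarrow> ('a \<Rightarrow> 'a) \<Rightarrow> bool" where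
  "nonsingular M S \<longleftrightarrow> invertible_map M S \<and>
     (\<forall>A\<in>sets M. emeasure M A = 0 \<longleftrightarrow> emeasure M (S ` A) = 0)"

definition measure_preserving :: "'a measure \<Rightarrow> ('a \<Rightarrow> 'a) \<Rightarrow> bool" where
  "measure_preserving M S \<longleftrightarrow> S \<in> measurable M M \<and>
     (\<forall>A\<in>sets M. emeasure M (S -` A \<inter> space M) = emeasure M A)"

definition conservative :: "'a measure \<Rightarrow> ('a \<Rightarrow> 'a) \<Rightarrow> bool" where
  "conservative M T \<longleftrightarrow> (\<forall>W\<in>sets M.
     (\<forall>n m. n \<noteq> m \<longrightarrow> ((T^^n) -` W) \<inter> ((T^^m) -` W) \<inter> space M = {})
       \<longrightarrow> emeasure M W = 0)"

definition ergodic :: "'a measure \<Rightarrow> ('a \<Rightarrow> 'a) \<Rightarrow> bool" where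
  "ergodic M T \<longleftrightarrow> (\<forall>A\<in>sets M. T -` A \<inter> space M = A \<longrightarrow>
     emeasure M A = 0 \<or> emeasure M (space M - A) = 0)"

definition squashable :: "'a measure \<Rightarrow> ('a \<Rightarrow> 'a) \<Rightarrow> bool" where
  "squashable M T \<longleftrightarrow> (\<exists>S. nonsingular M S \<and> (\<forall>x\<in>space M. S (T x) = T (S x))
     \<and> \<not> measure_preserving M S)"

definition u_seq :: "'a measure \<Rightarrow> ('a \<Rightarrow> 'a) \<Rightarrow> 'a set \<Rightarrow> nat \<Rightarrow> real" where
  "u_seq M T F k = measure M (F \<inter> (T^^k) ` F) / (measure M F)^2"

definition a_seq :: "'a measure \<Rightarrow> ('a \<Rightarrow> 'a) \<Rightarrow> 'a set \<Rightarrow> nat \<Rightarrow> real" where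
  "a_seq M T F n = (\<Sum>k<n. u_seq M T F k)"

definition subseq_weakly_rationally_ergodic :: "'a measure \<Rightarrow> ('a \<Rightarrow> 'a) \<Rightarrow> bool" where
  "subseq_weakly_rationally_ergodic M T \<longleftrightarrow>
    (\<exists>(n::nat \<Rightarrow> nat) F. filterlim n at_top sequentially \<and> F \<in> sets M \<and>
       0 < emeasure M F \<and> emeasure M F < \<infinity> \<and>
       emeasure M (space M - (\<Union>i. (T^^i) ` F)) = 0 \<and>
       (\<forall>A B. A \<in> sets M \<longrightarrow> B \<in> sets M \<longrightarrow> A \<subseteq> F \<longrightarrow> B \<subseteq> F \<longrightarrow>
          (\<lambda>i. (1 / a_seq M T F (n i)) * (\<Sum>k<n i. measure M (A \<inter> (T^^k) ` B)))
            \<longlonglongrightarrow> measure M A * measure M B))"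

end

theory Submission
  imports Defs
begin

text \<open>Let nu(A) = mu(S^-1 A). Nonsingularity of S gives nu << mu, and since S commutes with the
  measure-preserving T, nu is T-invariant; so its Radon-Nikodym density is T-invariant, hence
  constant by ergodicity: mu(S^-1 A) = c mu(A). To see c = 1, take A' contained in S F and in
  T^i F with positive measure, which exists because the images T^i F cover X. The sets S^-1 A'
  and T^-i A' lie in F, and their return sums sum_(k<n) mu(B \<inter> T^k B) differ exactly by the
  factor c, while along the subsequence the normalised sums tend to c^2 mu(A')^2 and mu(A')^2
  respectively. Hence c^2 = c, and c > 0.\<close>

lemma image_eq_vimage_the_inv: "bij g \<Longrightarrow> g ` B = the_inv g -` B"
  by (auto simp: bij_def the_inv_f_f) (metis UNIV_I f_the_inv_into_f image_eqI)

lemma funpow_image_eq_vimage: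
  fixes T :: "'a \<Rightarrow> 'a"
  assumes "bij T" shows "(T^^k) ` B = (the_inv T ^^ k) -` B"
proof (induction k arbitrary: B)
  case (Suc k)
  have "(T^^Suc k) ` B = T ` ((T^^k) ` B)" by (simp add: image_comp)
  also have "\<dots> = (the_inv T ^^ Suc k) -` B"
    using Suc image_eq_vimage_the_inv[OF assms]
    by (simp del: funpow.simps add: funpow_Suc_right vimage_comp)
  finally show ?case .
qed simp

lemma commute_funpow: "(\<And>x. P (Q x) = Q (P x)) \<Longrightarrow> P ((Q^^k) x) = (Q^^k) (P x)"
  by (induction k) auto

lemma image_vimage_commute:
  assumes "bij P" and "\<And>x. P (Q x) = Q (P x)"
  shows "Q ` (P -` X) = P -` (Q ` X)"
proof (intro set_eqI iffI)
  fix y assume "y \<in> P -` (Q ` X)"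
  then obtain z where z: "z \<in> X" "P y = Q z" by auto
  obtain x where x: "z = P x" using assms(1) by (metis bij_pointE)
  have "P y = P (Q x)" using z x assms(2) by simp
  then have "y = Q x" using assms(1) by (simp add: bij_def inj_eq)
  then show "y \<in> Q ` (P -` X)" using x z by auto
qed (use assms(2) in auto)

lemma vimage_Int_image_vimage:
  assumes "bij P" and "\<And>x. P (Q x) = Q (P x)"
  shows "P -` X \<inter> Q ` (P -` X) = P -` (X \<inter> Q ` X)"
  using image_vimage_commute[of P Q X, OF assms] by auto

lemma vimage_in_sets:
  "space M = UNIV \<Longrightarrow> g \<in> measurable M M \<Longrightarrow> B \<in> sets M \<Longrightarrow> g -` B \<in> sets M"
  by (metis Int_UNIV_right measurable_sets)

lemma image_in_sets_invertible_map:
  assumes "invertible_map M S" "space M = UNIV" "B \<in> sets M"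
  shows "S ` B \<in> sets M"
  using assms image_eq_vimage_the_inv[of S B] vimage_in_sets[of M "the_inv S" B]
  by (simp add: invertible_map_def)

lemma measure_preserving_funpow:
  assumes "measure_preserving M T" "space M = UNIV"
  shows "measure_preserving M (T^^n)"
proof (induction n)
  case 0 then show ?case using assms by (simp add: measure_preserving_def)
next
  case (Suc n)
  have [measurable]: "T \<in> measurable M M" using assms by (simp add: measure_preserving_def)
  show ?case unfolding measure_preserving_def
  proof (intro conjI ballI)
    fix A assume A[measurable]: "A \<in> sets M"
    have "(T ^^ Suc n) -` A = T -` ((T^^n) -` A)"
      by (simp add: vimage_comp funpow_Suc_right del: funpow.simps)
    moreover have "(T^^n) -` A \<in> sets M"
      using vimage_in_sets[of M "T^^n" A] assms(2) by simp
    ultimately show "emeasure M ((T ^^ Suc n) -` A \<inter> space M) = emeasure M A"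
      using assms Suc A by (simp add: measure_preserving_def)
  qed simp
qed

lemma distr_measure_preserving:
  assumes "measure_preserving M T" "space M = UNIV"
  shows "distr M M T = M"
  using assms by (intro measure_eqI) (simp_all add: emeasure_distr measure_preserving_def)

lemma AE_measure_preserving_comp:
  assumes "measure_preserving M T" "space M = UNIV" and "AE x in M. P x"
  shows "AE x in M. P (T x)"
proof -
  obtain N where N: "{x \<in> space M. \<not> P x} \<subseteq> N" "emeasure M N = 0" "N \<in> sets M"
    using assms(3) by (auto elim: AE_E)
  have "emeasure M (T -` N \<inter> space M) = 0" "T -` N \<inter> space M \<in> sets M"
    using assms(1) N by (auto simp: measure_preserving_def intro: measurable_sets)
  then show ?thesis
    by (rule AE_I[rotated]) (use N assms(2) in auto)
qed

lemma AE_eq_const_of_AE_le_or_gt: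
  fixes g :: "'a \<Rightarrow> ennreal"
  assumes le_or_gt: "\<And>q. (AE x in M. g x \<le> q) \<or> (AE x in M. q < g x)"
  shows "\<exists>c. AE x in M. g x = c"
proof -
  define c where "c = Inf {q. AE x in M. g x \<le> q}"
  have above: "AE x in M. \<forall>r::rat. c < ennreal (of_rat r) \<longrightarrow> g x \<le> ennreal (of_rat r)"
  proof (subst AE_all_countable, intro allI)
    fix r :: rat
    show "AE x in M. c < ennreal (of_rat r) \<longrightarrow> g x \<le> ennreal (of_rat r)"
    proof (cases "c < ennreal (of_rat r)")
      case True
      then obtain q where q: "AE x in M. g x \<le> q" "q < ennreal (of_rat r)"
        unfolding c_def by (auto simp: Inf_less_iff)
      from q(1) show ?thesis by eventually_elim (use q(2) in auto)
    qed simp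
  qed
  have below: "AE x in M. \<forall>r::rat. ennreal (of_rat r) < c \<longrightarrow> ennreal (of_rat r) < g x"
  proof (subst AE_all_countable, intro allI)
    fix r :: rat
    show "AE x in M. ennreal (of_rat r) < c \<longrightarrow> ennreal (of_rat r) < g x"
    proof (cases "ennreal (of_rat r) < c")
      case True
      have "\<not> (AE x in M. g x \<le> ennreal (of_rat r))"
      proof
        assume "AE x in M. g x \<le> ennreal (of_rat r)"
        then have "c \<le> ennreal (of_rat r)" unfolding c_def by (auto intro: Inf_lower)
        with True show False by simp
      qed
      with le_or_gt have "AE x in M. ennreal (of_rat r) < g x" by blast
      then show ?thesis by eventually_elim simp
    qed simp
  qed
  from above below have "AE x in M. g x = c"
  proof eventually_elim
    case (elim x)
    have "\<not> c < g x"
    proof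
      assume "c < g x"
      then obtain r where "c < ennreal (of_rat r)" "ennreal (of_rat r) < g x"
        using ennreal_rat_dense by blast
      with elim(1) show False by force
    qed
    moreover have "\<not> g x < c"
    proof
      assume "g x < c"
      then obtain r where "g x < ennreal (of_rat r)" "ennreal (of_rat r) < c"
        using ennreal_rat_dense by blast
      with elim(2) show False by force
    qed
    ultimately show ?case by auto
  qed
  then show ?thesis ..
qed

lemma weighted_sums_ratio_idempotent:
  fixes r a b :: real
  assumes lim_x: "(\<lambda>i. w i * (\<Sum>k<n i. x k)) \<longlonglongrightarrow> a * a"
    and lim_y: "(\<lambda>i. w i * (\<Sum>k<n i. y k)) \<longlonglongrightarrow> b * b"
    and "\<And>k. x k = r * y k" "a = r * b" "b \<noteq> 0"
  shows "r * r = r"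
proof -
  have "(\<lambda>i. w i * (\<Sum>k<n i. x k)) = (\<lambda>i. r * (w i * (\<Sum>k<n i. y k)))"
    using assms(3) by (simp add: sum_distrib_left mult_ac)
  with lim_y have "(\<lambda>i. w i * (\<Sum>k<n i. x k)) \<longlonglongrightarrow> r * (b * b)"
    by (simp add: tendsto_mult_left)
  with lim_x have "(r * r) * (b * b) = r * (b * b)"
    using assms(4) by (metis LIMSEQ_unique mult.assoc mult.left_commute)
  then show ?thesis using assms(5) by simp
qed

locale invertible_mpt = sigma_finite_measure M for M :: "'a measure" +
  fixes T :: "'a \<Rightarrow> 'a"
  assumes space_eq: "space M = UNIV"
    and invertible: "invertible_map M T"
    and preserving: "measure_preserving M T"
begin

lemma bij_T: "bij T"
  using invertible space_eq by (simp add: invertible_map_def)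

lemma measurable_T [measurable]: "T \<in> measurable M M"
  using invertible by (simp add: invertible_map_def)

lemma funpow_image_in_sets: "B \<in> sets M \<Longrightarrow> (T^^k) ` B \<in> sets M"
proof -
  have "the_inv T \<in> measurable M M"
    using invertible space_eq by (simp add: invertible_map_def)
  then show "B \<in> sets M \<Longrightarrow> (T^^k) ` B \<in> sets M"
    using funpow_image_eq_vimage[OF bij_T, of k B] vimage_in_sets[OF space_eq] by simp
qed

lemma emeasure_funpow_vimage: "B \<in> sets M \<Longrightarrow> emeasure M ((T^^k) -` B) = emeasure M B"
  using measure_preserving_funpow[OF preserving space_eq, of k] space_eq
  by (simp add: measure_preserving_def)

lemma emeasure_funpow_image: "B \<in> sets M \<Longrightarrow> emeasure M ((T^^k) ` B) = emeasure M B"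
  using emeasure_funpow_vimage[OF funpow_image_in_sets, of B k k] bij_T
  by (simp add: bij_is_inj inj_vimage_image_eq)

lemma AE_invariant_funpow:
  assumes "AE x in M. g (T x) = g x"
  shows "AE x in M. \<forall>k. g ((T^^k) x) = g x"
proof (subst AE_all_countable, intro allI)
  fix k show "AE x in M. g ((T^^k) x) = g x"
  proof (induction k)
    case (Suc k)
    have "AE x in M. g (T ((T^^k) x)) = g ((T^^k) x)"
      using AE_measure_preserving_comp[OF measure_preserving_funpow[OF preserving space_eq] space_eq assms] .
    with Suc show ?case by eventually_elim simp
  qed simp
qed

text \<open>A set that is only almost invariant is replaced by the exactly invariant set of points
  whose forward orbit eventually stays in it.\<close>
lemma ergodic_AE_invariant_set:
  assumes "ergodic M T" "A \<in> sets M" and invariant: "AE x in M. T x \<in> A \<longleftrightarrow> x \<in> A"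
  shows "(AE x in M. x \<notin> A) \<or> (AE x in M. x \<in> A)"
proof -
  define L where "L = {x. eventually (\<lambda>n. (T^^n) x \<in> A) sequentially}"
  have L_sets: "L \<in> sets M"
  proof -
    have "L = {x \<in> space M. \<exists>N. \<forall>n\<ge>N. (T^^n) x \<in> A}"
      unfolding L_def eventually_sequentially using space_eq by simp
    then show ?thesis using assms(2) by simp
  qed
  have "(\<forall>\<^sub>F n in sequentially. (T^^n) (T x) \<in> A) \<longleftrightarrow> (\<forall>\<^sub>F n in sequentially. (T^^n) x \<in> A)"
    for x using eventually_sequentially_Suc[of "\<lambda>n. (T^^n) x \<in> A"] by (simp add: funpow_swap1)
  then have "T -` L \<inter> space M = L"
    unfolding L_def using space_eq by simp
  with assms(1) L_sets have L_trivial: "emeasure M L = 0 \<or> emeasure M (space M - L) = 0"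
    by (simp add: ergodic_def)
  have "AE x in M. \<forall>k. ((T^^k) x \<in> A) = (x \<in> A)"
    using AE_invariant_funpow[OF invariant] .
  then have AE_L: "AE x in M. x \<in> L \<longleftrightarrow> x \<in> A"
    by eventually_elim (simp add: L_def)
  from L_trivial show ?thesis
  proof
    assume "emeasure M L = 0"
    with L_sets have "AE x in M. x \<notin> L" by (intro AE_not_in) (simp add: null_sets_def)
    with AE_L have "AE x in M. x \<notin> A" by eventually_elim simp
    then show ?thesis ..
  next
    assume "emeasure M (space M - L) = 0"
    with L_sets have "AE x in M. x \<in> L"
      by (subst AE_iff_measurable[OF _ refl]) (auto simp: set_diff_eq)
    with AE_L have "AE x in M. x \<in> A" by eventually_elim simp
    then show ?thesis ..
  qed
qed

lemma ergodic_AE_invariant_const: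
  fixes g :: "'a \<Rightarrow> ennreal"
  assumes "ergodic M T" "g \<in> borel_measurable M" and invariant: "AE x in M. g (T x) = g x"
  shows "\<exists>c. AE x in M. g x = c"
proof (rule AE_eq_const_of_AE_le_or_gt)
  fix q
  have "AE x in M. T x \<in> {y. q < g y} \<longleftrightarrow> x \<in> {y. q < g y}"
    using invariant by eventually_elim simp
  moreover have "{y. q < g y} \<in> sets M"
  proof -
    have "{y \<in> space M. q < g y} \<in> sets M" using assms(2) by measurable
    then show ?thesis using space_eq by simp
  qed
  ultimately consider "AE x in M. x \<notin> {y. q < g y}" | "AE x in M. x \<in> {y. q < g y}"
    using ergodic_AE_invariant_set[OF assms(1)] by blast
  then show "(AE x in M. g x \<le> q) \<or> (AE x in M. q < g x)"
  proof cases
    case 1 then have "AE x in M. g x \<le> q" by eventually_elim (simp add: not_less)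
    then show ?thesis ..
  next
    case 2 then have "AE x in M. q < g x" by eventually_elim simp
    then show ?thesis ..
  qed
qed

lemma AE_density_invariant:
  assumes [measurable]: "f \<in> borel_measurable M"
    and invariant: "\<And>A. A \<in> sets M \<Longrightarrow> emeasure (density M f) (T ` A) = emeasure (density M f) A"
  shows "AE x in M. f (T x) = f x"
proof (rule density_unique)
  show "density M (\<lambda>x. f (T x)) = density M f"
  proof (rule measure_eqI)
    fix A assume "A \<in> sets (density M (\<lambda>x. f (T x)))"
    then have A: "A \<in> sets M" by simp
    then have TA: "T ` A \<in> sets M" using funpow_image_in_sets[of A 1] by simp
    have "emeasure (density M (\<lambda>x. f (T x))) A = (\<integral>\<^sup>+x. f (T x) * indicator (T ` A) (T x) \<partial>M)"
      using A bij_T by (simp add: emeasure_density bij_is_inj inj_image_mem_iff indicator_def)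
    also have "\<dots> = (\<integral>\<^sup>+y. f y * indicator (T ` A) y \<partial>distr M M T)"
      using TA by (subst nn_integral_distr) auto
    also have "\<dots> = emeasure (density M f) (T ` A)"
      using TA by (simp add: distr_measure_preserving[OF preserving space_eq] emeasure_density)
    finally show "emeasure (density M (\<lambda>x. f (T x))) A = emeasure (density M f) A"
      using invariant[OF A] by simp
  qed simp
qed simp_all

lemma commuting_nonsingular_scales_measure:
  assumes "ergodic M T" "nonsingular M S" and commute: "\<And>x. S (T x) = T (S x)"
  obtains c where "\<And>A. A \<in> sets M \<Longrightarrow> emeasure M (S -` A) = c * emeasure M A"
proof -
  have bij_S: "bij S" and S_meas [measurable]: "S \<in> measurable M M"
    using assms(2) space_eq by (auto simp: nonsingular_def invertible_map_def)
  define N where "N = distr M M S"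
  have N_eq: "emeasure N A = emeasure M (S -` A)" if "A \<in> sets M" for A
    using that space_eq by (simp add: N_def emeasure_distr)
  have "absolutely_continuous M N"
    unfolding absolutely_continuous_def
  proof
    fix A assume "A \<in> null_sets M"
    moreover have "S ` (S -` A) = A" using bij_S by (simp add: bij_is_surj surj_image_vimage_eq)
    ultimately show "A \<in> null_sets N"
      using assms(2) vimage_in_sets[OF space_eq S_meas] N_eq
      by (auto simp: nonsingular_def null_sets_def N_def)
  qed
  then obtain f where f [measurable]: "f \<in> borel_measurable M" and density: "density M f = N"
    using Radon_Nikodym[of N] by (auto simp: N_def)
  have "S -` (T ` A) = T ` (S -` A)" for A
    using image_vimage_commute[OF bij_S, of T A] commute by simp
  then have "emeasure (density M f) (T ` A) = emeasure (density M f) A" if "A \<in> sets M" for A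
    using that funpow_image_in_sets[of _ 1] emeasure_funpow_image[of _ 1]
      vimage_in_sets[OF space_eq S_meas] by (simp add: density N_eq)
  then obtain c where "AE x in M. f x = c"
    using ergodic_AE_invariant_const[OF assms(1) f] AE_density_invariant[OF f] by blast
  have "emeasure M (S -` A) = c * emeasure M A" if A: "A \<in> sets M" for A
  proof -
    have "emeasure M (S -` A) = (\<integral>\<^sup>+x. f x * indicator A x \<partial>M)"
      using A by (simp add: N_eq[symmetric] density[symmetric] emeasure_density)
    also have "\<dots> = (\<integral>\<^sup>+x. c * indicator A x \<partial>M)"
      using \<open>AE x in M. f x = c\<close> by (intro nn_integral_cong_AE) auto
    finally show ?thesis using A by (simp add: nn_integral_cmult_indicator)
  qed
  then show thesis by (rule that)
qed

lemma orbit_meets_positive_set: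
  assumes "F \<in> sets M" and cover: "emeasure M (space M - (\<Union>i. (T^^i) ` F)) = 0"
    and "E \<in> sets M" "emeasure M E \<noteq> 0"
  obtains i where "emeasure M (E \<inter> (T^^i) ` F) \<noteq> 0"
proof (rule ccontr)
  assume "\<not> thesis"
  then have "emeasure M (E \<inter> (T^^i) ` F) = 0" for i
    using that by blast
  then have "E \<inter> (T^^i) ` F \<in> null_sets M" for i
    using assms(1,3) funpow_image_in_sets by auto
  moreover have "space M - (\<Union>i. (T^^i) ` F) \<in> null_sets M"
    using cover assms(1) funpow_image_in_sets by auto
  ultimately have "(\<Union>i. E \<inter> (T^^i) ` F) \<union> (space M - (\<Union>i. (T^^i) ` F)) \<in> null_sets M"
    by blast
  moreover have "E \<subseteq> (\<Union>i. E \<inter> (T^^i) ` F) \<union> (space M - (\<Union>i. (T^^i) ` F))"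
    using space_eq by auto
  ultimately have "E \<in> null_sets M" using assms(3) by (blast intro: null_sets_subset)
  with assms(4) show False by (simp add: null_sets_def)
qed

lemma measure_return_vimage_scaled:
  assumes "bij P" "\<And>x. P (T x) = T (P x)" "X \<in> sets M"
    and scale: "\<And>A. A \<in> sets M \<Longrightarrow> measure M (P -` A) = r * measure M A"
  shows "measure M (P -` X \<inter> (T^^k) ` (P -` X)) = r * measure M (X \<inter> (T^^k) ` X)"
  using vimage_Int_image_vimage[of P "T^^k" X, OF assms(1) commute_funpow[of P T, OF assms(2)]]
    assms(3) scale[of "X \<inter> (T^^k) ` X"] funpow_image_in_sets
  by (simp add: vimage_Int)

lemma return_sums_scale_idempotent:
  assumes lim: "\<And>A B. A \<in> sets M \<Longrightarrow> B \<in> sets M \<Longrightarrow> A \<subseteq> F \<Longrightarrow> B \<subseteq> F \<Longrightarrow>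
      (\<lambda>j. w j * (\<Sum>k<n j. measure M (A \<inter> (T^^k) ` B))) \<longlonglongrightarrow> measure M A * measure M B"
    and "bij S" "S \<in> measurable M M" and commute: "\<And>x. S (T x) = T (S x)"
    and scale: "\<And>A. A \<in> sets M \<Longrightarrow> measure M (S -` A) = r * measure M A"
    and A': "A' \<in> sets M" "A' \<subseteq> S ` F" "A' \<subseteq> (T^^i) ` F" "measure M A' \<noteq> 0"
  shows "r * r = r"
proof -
  define C where "C = S -` A'"
  define D where "D = (T^^i) -` A'"
  have bij_Ti: "bij (T^^i)" using bij_T by simp
  have C: "C \<in> sets M" "C \<subseteq> F"
    using vimage_in_sets[OF space_eq assms(3) A'(1)] A'(2)
      inj_vimage_image_eq[OF bij_is_inj[OF assms(2)], of F]
    by (auto simp: C_def)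
  have D: "D \<in> sets M" "D \<subseteq> F"
    using vimage_in_sets[OF space_eq measurable_compose_n[OF measurable_T, of i] A'(1)] A'(3)
      inj_vimage_image_eq[OF bij_is_inj[OF bij_Ti], of F]
    by (auto simp: D_def)
  have scale_Ti: "measure M ((T^^i) -` A) = 1 * measure M A" if "A \<in> sets M" for A
    using emeasure_funpow_vimage[OF that] by (simp add: measure_def)
  have commute_Ti: "(T^^i) (T x) = T ((T^^i) x)" for x
    by (metis funpow_swap1)
  show ?thesis
  proof (rule weighted_sums_ratio_idempotent[OF lim[OF C(1) C(1) C(2) C(2)] lim[OF D(1) D(1) D(2) D(2)]])
    show "measure M (C \<inter> (T^^k) ` C) = r * measure M (D \<inter> (T^^k) ` D)" for k
      using measure_return_vimage_scaled[OF assms(2) commute A'(1) scale, of k]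
        measure_return_vimage_scaled[OF bij_Ti commute_Ti A'(1) scale_Ti, of k]
      by (simp add: C_def D_def)
  qed (use scale[OF A'(1)] scale_Ti[OF A'(1)] A'(4) in \<open>simp_all add: C_def D_def\<close>)
qed

lemma swre_commuting_scale_eq_one:
  assumes "subseq_weakly_rationally_ergodic M T" "invertible_map M S"
    and commute: "\<And>x. S (T x) = T (S x)"
    and scale: "\<And>A. A \<in> sets M \<Longrightarrow> emeasure M (S -` A) = c * emeasure M A"
  shows "c = 1"
proof -
  obtain n F where F: "F \<in> sets M" "0 < emeasure M F" "emeasure M F < \<infinity>"
    and cover: "emeasure M (space M - (\<Union>i. (T^^i) ` F)) = 0"
    and lim: "\<And>A B. A \<in> sets M \<Longrightarrow> B \<in> sets M \<Longrightarrow> A \<subseteq> F \<Longrightarrow> B \<subseteq> F \<Longrightarrow>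
      (\<lambda>j. (1 / a_seq M T F (n j)) * (\<Sum>k<n j. measure M (A \<inter> (T^^k) ` B)))
        \<longlonglongrightarrow> measure M A * measure M B"
    using assms(1) unfolding subseq_weakly_rationally_ergodic_def by blast
  have bij_S: "bij S" and S_meas [measurable]: "S \<in> measurable M M"
    using assms(2) space_eq by (auto simp: invertible_map_def)
  have SF: "S ` F \<in> sets M" by (rule image_in_sets_invertible_map[OF assms(2) space_eq F(1)])
  have S_vimage_SF: "S -` (S ` F) = F" using bij_S by (simp add: bij_is_inj inj_vimage_image_eq)
  then have "emeasure M F = c * emeasure M (S ` F)" using scale[OF SF] by simp
  with F(2) have "emeasure M (S ` F) \<noteq> 0" "c \<noteq> 0" by auto
  then obtain i where A'_pos: "emeasure M (S ` F \<inter> (T^^i) ` F) \<noteq> 0"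
    using orbit_meets_positive_set[OF F(1) cover SF] by blast
  define A' where "A' = S ` F \<inter> (T^^i) ` F"
  have A': "A' \<in> sets M" using SF funpow_image_in_sets[OF F(1)] by (auto simp: A'_def)
  have A'_sub: "A' \<subseteq> S ` F" "A' \<subseteq> (T^^i) ` F" by (auto simp: A'_def)
  have "c * emeasure M A' = emeasure M (S -` A')" using scale[OF A'] by simp
  also have "\<dots> \<le> emeasure M F"
    using emeasure_mono[OF _ F(1), of "S -` A'"] vimage_mono[OF A'_sub(1), of S] S_vimage_SF by simp
  finally have "c \<noteq> \<infinity>" using A'_pos F(3) by (auto simp: A'_def ennreal_mult_eq_top_iff top_unique)
  define r where "r = enn2real c"
  have c_eq: "c = ennreal r" and "r \<ge> 0"
    using \<open>c \<noteq> \<infinity>\<close> by (simp_all add: r_def less_top)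
  have scale_S: "measure M (S -` A) = r * measure M A" if "A \<in> sets M" for A
    using scale[OF that] \<open>r \<ge> 0\<close> by (simp add: measure_def c_eq enn2real_mult)
  have "emeasure M A' \<le> emeasure M ((T^^i) ` F)"
    by (rule emeasure_mono[OF A'_sub(2) funpow_image_in_sets[OF F(1)]])
  then have measure_A': "measure M A' \<noteq> 0"
    using A'_pos emeasure_funpow_image[OF F(1), of i] F(3)
    by (auto simp: A'_def measure_def enn2real_eq_0_iff top_unique)
  have "r * r = r"
    by (rule return_sums_scale_idempotent[where w = "\<lambda>j. 1 / a_seq M T F (n j)"])
      (fact lim bij_S S_meas commute scale_S A' A'_sub measure_A')+
  with \<open>c \<noteq> 0\<close> show "c = 1" by (auto simp: c_eq)
qed

theorem measure_preserving_if_commuting: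
  assumes "ergodic M T" "subseq_weakly_rationally_ergodic M T" "nonsingular M S"
    and commute: "\<And>x. S (T x) = T (S x)"
  shows "measure_preserving M S"
proof -
  obtain c where scale: "\<And>A. A \<in> sets M \<Longrightarrow> emeasure M (S -` A) = c * emeasure M A"
    using commuting_nonsingular_scales_measure[OF assms(1,3) commute] by blast
  moreover have "c = 1"
    using swre_commuting_scale_eq_one[OF assms(2) _ commute scale] assms(3)
    by (simp add: nonsingular_def)
  ultimately show ?thesis
    using assms(3) space_eq by (simp add: measure_preserving_def nonsingular_def invertible_map_def)
qed

end

theorem mainTheorem6:
  fixes M :: "('a::polish_space) measure" and T :: "'a \<Rightarrow> 'a"
  assumes "standard_borel_space M" and "sigma_finite_measure M" and "nonatomic M"
    and "invertible_map M T" and "measure_preserving M T"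
    and "conservative M T" and "ergodic M T"
    and "subseq_weakly_rationally_ergodic M T"
  shows "(\<forall>S. nonsingular M S \<and> (\<forall>x\<in>space M. S (T x) = T (S x)) \<longrightarrow> measure_preserving M S)
         \<and> \<not> squashable M T"
proof -
  have "space M = UNIV" using assms(1) by (simp add: standard_borel_space_def)
  then interpret invertible_mpt M T
    using assms(2,4,5) by (simp add: invertible_mpt_def invertible_mpt_axioms_def)
  have "\<forall>S. nonsingular M S \<and> (\<forall>x\<in>space M. S (T x) = T (S x)) \<longrightarrow> measure_preserving M S"
    using measure_preserving_if_commuting[OF assms(7,8)] space_eq by auto
  then show ?thesis unfolding squashable_def by blast
qed

end
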